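(* Let $\boldsymbol{\mu}=(\mu_1,\mu_2)\in\Lambda$ with $\mu_1>\mu_2$ and $\mu_1+\mu_2\ge1$. Then for every $\delta$ with $0<\delta\le\min\{x^\star(\boldsymbol{\mu}),1-x^\star(\boldsymbol{\mu})\}$, $$g(x^\star(\boldsymbol{\mu})-\delta,\boldsymbol{\mu})\ge g(x^\star(\boldsymbol{\mu})+\delta,\boldsymbol{\mu}).$$
   Context: $\Lambda=\{\boldsymbol{\mu}\in(0,1)^2:\mu_1\neq\mu_2\}$ (means of a two-armed Bernoulli bandit). For $p,q\in(0,1)$ let $d(p,q)$ be the Bernoulli Kullback–Leibler divergence. For $x\in[0,1]$, $g(x,\boldsymbol{\mu})=\inf_{\lambda\in(0,1)}\big[(1-x)d(\lambda,\mu_1)+x\,d(\lambda,\mu_2)\big]=-\log\big((1-\mu_1)^{1-x}(1-\mu_2)^x+\mu_1^{1-x}\mu_2^x\big)$, and $x^\star(\boldsymbol{\mu})=\arg\max_{x\in(0,1)}g(x,\boldsymbol{\mu})$. *)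

theory Defs
  imports "HOL-Analysis.Analysis"
begin

definition kl_bern :: "real \<Rightarrow> real \<Rightarrow> real" where
  "kl_bern p q = p * ln (p / q) + (1 - p) * ln ((1 - p) / (1 - q))"

definition Lambda :: "(real \<times> real) set" where
  "Lambda = {mu. 0 < fst mu \<and> fst mu < 1 \<and> 0 < snd mu \<and> snd mu < 1 \<and> fst mu \<noteq> snd mu}"

definition gfun :: "real \<Rightarrow> real \<times> real \<Rightarrow> real" where
  "gfun x mu = (INF lam \<in> {0<..<1}. (1 - x) * kl_bern lam (fst mu) + x * kl_bern lam (snd mu))"

definition xstar :: "real \<times> real \<Rightarrow> real" where
  "xstar mu = (THE x. x \<in> {0<..<1} \<and> (\<forall>y \<in> {0<..<1}. gfun y mu \<le> gfun x mu))"

end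

theory Submission imports Defs begin

text \<open>
  By Gibbs' inequality the infimum defining g(x, mu) is -ln F(x), where
  F(x) = (1-mu1)^(1-x) (1-mu2)^x + mu1^(1-x) mu2^x is a sum of two exponentials in x with rates
  a = ln((1-mu2)/(1-mu1)) > 0 and -b = -ln(mu1/mu2) < 0. Around its unique minimiser x*,
  F(x* + s) = A e^(a s) + C e^(-b s) with the stationarity condition A a = C b, so that
  F(x* + t) - F(x* - t) = 2 C b (sinh(a t)/a - sinh(b t)/b). Since sinh u / u increases for u >= 0,
  this is nonnegative whenever b <= a, i.e. mu1(1-mu1) <= mu2(1-mu2), which for mu1 > mu2 is
  exactly mu1 + mu2 >= 1.
\<close>

lemma exp_gt_add_one_self:
  fixes u :: real
  assumes "u \<noteq> 0"
  shows "1 + u < exp u"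
proof (cases "u < -2")
  case True
  then show ?thesis using exp_gt_zero[of u] by linarith
next
  case False
  have "0 < u * u"
    using assms by (metis not_real_square_gt_zero)
  then have "1 + u < (1 + u/2) * (1 + u/2)"
    by (simp add: algebra_simps)
  also have "\<dots> \<le> exp (u/2) * exp (u/2)"
    using False exp_ge_add_one_self[of "u/2"] by (intro mult_mono) auto
  also have "\<dots> = exp u"
    by (simp flip: exp_add)
  finally show ?thesis .
qed

lemma ln_less_minus_one:
  fixes y :: real
  assumes "0 < y" "y \<noteq> 1"
  shows "ln y < y - 1"
  using exp_gt_add_one_self[of "ln y"] assms by simp

lemma sinh_scale_le:
  fixes c v :: real
  assumes "0 \<le> c" "c \<le> 1" "0 \<le> v"
  shows "sinh (c * v) \<le> c * sinh v"
proof -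
  have "convex_on {0..} (sinh :: real \<Rightarrow> real)"
    by (rule f''_ge0_imp_convex[where f' = cosh and f'' = sinh])
       (auto intro!: derivative_eq_intros)
  from convex_onD[OF this, of c 0 v] assms show ?thesis
    by simp
qed

lemma balanced_exp_sum_strict_min:
  fixes A C a b s :: real
  assumes "0 < A" "0 < C" "A * a = C * b" "a \<noteq> 0" "s \<noteq> 0"
  shows "A + C < A * exp (a * s) + C * exp (- (b * s))"
proof -
  have "A * (1 + a * s) < A * exp (a * s)"
    using assms exp_gt_add_one_self[of "a * s"] by simp
  moreover have "C * (1 - b * s) \<le> C * exp (- (b * s))"
    using assms exp_ge_add_one_self[of "- (b * s)"] by simp
  moreover have "A * (a * s) = C * (b * s)"
    using assms(3) by (metis mult.assoc)
  ultimately show ?thesis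
    by (simp add: algebra_simps)
qed

lemma balanced_exp_sum_skew:
  fixes A C a b t :: real
  assumes "0 < C" "0 < b" "b \<le> a" "A * a = C * b" "0 \<le> t"
  shows "A * exp (- (a * t)) + C * exp (b * t) \<le> A * exp (a * t) + C * exp (- (b * t))"
proof -
  have a: "0 < a" using assms by linarith
  have "C * sinh (b * t) = C * sinh ((b / a) * (a * t))"
    using a by simp
  also have "\<dots> \<le> C * ((b / a) * sinh (a * t))"
    using assms a by (intro mult_left_mono sinh_scale_le) auto
  also have "\<dots> = A * sinh (a * t)"
    using assms(4) a by (simp add: field_simps)
  finally show ?thesis
    by (simp add: sinh_def algebra_simps)
qed

locale two_exp_sum =
  fixes a0 a b0 b :: real
  assumes a_pos: "0 < a" and b_pos: "0 < b"
begin

definition F :: "real \<Rightarrow> real" where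
  "F x = exp (a0 + x * a) + exp (b0 - x * b)"

definition xmin :: real where
  "xmin = (b0 + ln b - a0 - ln a) / (a + b)"

lemma F_pos: "0 < F x"
  unfolding F_def by (intro add_pos_pos) auto

lemma balanced_at_xmin: "exp (a0 + xmin * a) * a = exp (b0 - xmin * b) * b"
proof -
  have "xmin * (a + b) = b0 + ln b - a0 - ln a"
    unfolding xmin_def using a_pos b_pos by simp
  then have "a0 + xmin * a + ln a = b0 - xmin * b + ln b"
    by (simp add: algebra_simps)
  then show ?thesis
    using a_pos b_pos by (metis exp_add exp_ln)
qed

lemma F_xmin_shift:
  "F (xmin + s) = exp (a0 + xmin * a) * exp (a * s) + exp (b0 - xmin * b) * exp (- (b * s))"
  unfolding F_def by (simp flip: exp_add add: algebra_simps)

lemma F_strict_min: "y \<noteq> xmin \<Longrightarrow> F xmin < F y"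
  using balanced_exp_sum_strict_min[OF _ _ balanced_at_xmin, of "y - xmin"] a_pos
    F_xmin_shift[of 0] F_xmin_shift[of "y - xmin"] by simp

lemma F_skew: "b \<le> a \<Longrightarrow> 0 \<le> t \<Longrightarrow> F (xmin - t) \<le> F (xmin + t)"
  using balanced_exp_sum_skew[OF _ b_pos _ balanced_at_xmin, of t]
    F_xmin_shift[of t] F_xmin_shift[of "- t"] by simp

lemma xmin_pos_iff: "0 < xmin \<longleftrightarrow> a * exp a0 < b * exp b0"
proof -
  have "a * exp a0 < b * exp b0 \<longleftrightarrow> ln (a * exp a0) < ln (b * exp b0)"
    using a_pos b_pos by simp
  also have "\<dots> \<longleftrightarrow> 0 < xmin"
    unfolding xmin_def using a_pos b_pos by (simp add: ln_mult zero_less_divide_iff; arith)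
  finally show ?thesis ..
qed

lemma xmin_less_one_iff: "xmin < 1 \<longleftrightarrow> b * exp (b0 - b) < a * exp (a0 + a)"
proof -
  have "b * exp (b0 - b) < a * exp (a0 + a)
        \<longleftrightarrow> ln (b * exp (b0 - b)) < ln (a * exp (a0 + a))"
    using a_pos b_pos by simp
  also have "\<dots> \<longleftrightarrow> xmin < 1"
    unfolding xmin_def using a_pos b_pos by (simp add: ln_mult divide_less_eq; arith)
  finally show ?thesis ..
qed

end

lemma kl_bern_pos:
  fixes p q :: real
  assumes "0 < p" "p < 1" "0 < q" "q < 1" "p \<noteq> q"
  shows "0 < kl_bern p q"
proof -
  have "p * ln (q / p) < p * (q / p - 1)"
    using assms ln_less_minus_one[of "q / p"] by simp
  moreover have "(1 - p) * ln ((1 - q) / (1 - p)) \<le> (1 - p) * ((1 - q) / (1 - p) - 1)"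
    using assms ln_le_minus_one[of "(1 - q) / (1 - p)"] by (intro mult_left_mono) auto
  moreover have "p * (q / p - 1) + (1 - p) * ((1 - q) / (1 - p) - 1) = 0"
    using assms by (simp add: field_simps)
  ultimately have "p * ln (q / p) + (1 - p) * ln ((1 - q) / (1 - p)) < 0"
    by linarith
  then show ?thesis
    unfolding kl_bern_def using assms by (simp add: ln_div algebra_simps)
qed

lemma kl_bern_nonneg:
  fixes p q :: real
  assumes "0 < p" "p < 1" "0 < q" "q < 1"
  shows "0 \<le> kl_bern p q"
  using kl_bern_pos[OF assms] by (cases "p = q") (auto simp: kl_bern_def)

lemma gfun_closed_form:
  fixes mu1 mu2 x :: real
  assumes "0 < mu1" "mu1 < 1" "0 < mu2" "mu2 < 1"
  shows "gfun x (mu1, mu2)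
    = - ln ((1 - mu1) powr (1 - x) * (1 - mu2) powr x + mu1 powr (1 - x) * mu2 powr x)"
proof -
  define P where "P = mu1 powr (1 - x) * mu2 powr x"
  define Q where "Q = (1 - mu1) powr (1 - x) * (1 - mu2) powr x"
  have PQ: "0 < P" "0 < Q"
    unfolding P_def Q_def using assms by auto
  define r where "r = P / (P + Q)"
  have r: "0 < r" "r < 1" "1 - r = Q / (P + Q)"
    unfolding r_def using PQ by (auto simp: field_simps)
  have ln_PQ: "ln P = (1 - x) * ln mu1 + x * ln mu2"
    "ln Q = (1 - x) * ln (1 - mu1) + x * ln (1 - mu2)"
    unfolding P_def Q_def using assms by (simp_all add: ln_mult ln_powr)
  have ln_r: "ln r = ln P - ln (P + Q)" "ln (1 - r) = ln Q - ln (P + Q)"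
    unfolding r(3) unfolding r_def using PQ by (simp_all add: ln_div)
  have obj: "(1 - x) * kl_bern l mu1 + x * kl_bern l mu2 = kl_bern l r - ln (P + Q)"
    if "0 < l" "l < 1" for l
    using that assms r unfolding kl_bern_def
    by (simp add: ln_div ln_PQ ln_r algebra_simps)
  have "gfun x (mu1, mu2) = - ln (P + Q)"
    unfolding gfun_def fst_conv snd_conv
  proof (rule cInf_eq_minimum)
    show "- ln (P + Q) \<in> (\<lambda>l. (1 - x) * kl_bern l mu1 + x * kl_bern l mu2) ` {0<..<1}"
      using obj[of r] r by (intro image_eqI[of _ _ r]) (auto simp: kl_bern_def)
  next
    fix y assume "y \<in> (\<lambda>l. (1 - x) * kl_bern l mu1 + x * kl_bern l mu2) ` {0<..<1}"
    then obtain l where "0 < l" "l < 1" "y = (1 - x) * kl_bern l mu1 + x * kl_bern l mu2"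
      by auto
    then show "- ln (P + Q) \<le> y"
      using obj kl_bern_nonneg[of l r] r by simp
  qed
  then show ?thesis
    unfolding P_def Q_def by (simp add: add.commute)
qed

lemma xstar_eqI:
  assumes "x0 \<in> {0<..<1}" "\<And>y. y \<noteq> x0 \<Longrightarrow> gfun y mu < gfun x0 mu"
  shows "xstar mu = x0"
  unfolding xstar_def
proof (rule the_equality)
  show "x0 \<in> {0<..<1} \<and> (\<forall>y\<in>{0<..<1}. gfun y mu \<le> gfun x0 mu)"
    using assms by (metis order.refl order.strict_implies_order)
next
  fix x assume "x \<in> {0<..<1} \<and> (\<forall>y\<in>{0<..<1}. gfun y mu \<le> gfun x mu)"
  then show "x = x0"
    using assms by (meson not_le)
qed

theorem mainTheorem2:
  fixes mu1 mu2 \<delta> :: real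
  assumes "(mu1, mu2) \<in> Lambda"
    and "mu1 > mu2"
    and "mu1 + mu2 \<ge> 1"
    and "0 < \<delta>"
    and "\<delta> \<le> min (xstar (mu1, mu2)) (1 - xstar (mu1, mu2))"
  shows "gfun (xstar (mu1, mu2) - \<delta>) (mu1, mu2) \<ge> gfun (xstar (mu1, mu2) + \<delta>) (mu1, mu2)"
proof -
  have mu: "0 < mu1" "mu1 < 1" "0 < mu2" "mu2 < 1"
    using assms(1) unfolding Lambda_def by auto
  interpret two_exp_sum "ln (1 - mu1)" "ln (1 - mu2) - ln (1 - mu1)" "ln mu1" "ln mu1 - ln mu2"
    using mu assms(2) by unfold_locales simp_all
  have g: "gfun x (mu1, mu2) = - ln (F x)" for x
    unfolding gfun_closed_form[OF mu] F_def using mu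
    by (simp add: powr_def flip: exp_add) (simp add: algebra_simps)
  \<comment> \<open>\<open>F'(0) = - kl_bern mu1 mu2 < 0\<close> and \<open>F'(1) = kl_bern mu2 mu1 > 0\<close>\<close>
  have "0 < xmin"
    unfolding xmin_pos_iff using kl_bern_pos[of mu1 mu2] mu assms(2)
    by (simp add: kl_bern_def ln_div algebra_simps)
  moreover have "xmin < 1"
    unfolding xmin_less_one_iff using kl_bern_pos[of mu2 mu1] mu assms(2)
    by (simp add: kl_bern_def ln_div algebra_simps)
  ultimately have xstar: "xstar (mu1, mu2) = xmin"
    using F_strict_min F_pos by (intro xstar_eqI) (auto simp: g)
  have "mu1 * (1 - mu1) \<le> mu2 * (1 - mu2)"
    using assms(2,3) mult_nonneg_nonneg[of "mu1 - mu2" "mu1 + mu2 - 1"]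
    by (simp add: algebra_simps)
  then have "ln (mu1 * (1 - mu1)) \<le> ln (mu2 * (1 - mu2))"
    using mu by simp
  then have "ln mu1 - ln mu2 \<le> ln (1 - mu2) - ln (1 - mu1)"
    using mu by (simp add: ln_mult)
  then show ?thesis
    using F_skew[of "\<delta>"] assms(4) by (simp add: xstar g F_pos)
qed

end
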